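(* Let $\mathcal{X}$ be a finite set, $\underline{Q}$ a lower transition rate operator on $\mathcal{L}(\mathcal{X})$ and $(\underline{Q}_n)_{n\in\mathbb{N}}$ a sequence of lower transition rate operators on $\mathcal{L}(\mathcal{X})$. Then $\|\underline{Q}_n-\underline{Q}\|\to0$ if and only if $\underline{Q}_nf\to\underline{Q}f$ for every $f\in\mathcal{L}(\mathcal{X})$.
   Context: $\mathcal{L}(\mathcal{X})$ is the set of real-valued functions on $\mathcal{X}$ with pointwise operations and order, real constants identified with constant functions, $\mathbb{I}_y$ the indicator of $\{y\}$, and maximum norm $\|f\|=\max_x|f(x)|$; for non-negatively homogeneous operators $A$, $\|A\|\coloneqq\sup\{\|Af\|\colon\|f\|=1\}$. A lower transition rate operator is a map $\underline{Q}\colon\mathcal{L}(\mathcal{X})\to\mathcal{L}(\mathcal{X})$ such that for all $f,g$, $\lambda\ge0$, $\mu\in\mathbb{R}$, $x,y\in\mathcal{X}$: $\underline{Q}(\mu)=0$; $\underline{Q}(f+g)\ge\underline{Q}f+\underline{Q}g$; $\underline{Q}(\lambda f)=\lambda\underline{Q}f$; $x\ne y\Rightarrow\underline{Q}(\mathbb{I}_y)(x)\ge0$. *)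

theory Defs
  imports "HOL-Analysis.Analysis"
begin

text \<open>L(X) is represented by functions of type 'x \<Rightarrow> real with 'x a finite type.\<close>

definition indic1 :: "'x \<Rightarrow> 'x \<Rightarrow> real" where
  "indic1 y = (\<lambda>x. if x = y then 1 else 0)"

definition fnorm :: "('x::finite \<Rightarrow> real) \<Rightarrow> real" where
  "fnorm f = Max (range (\<lambda>x. \<bar>f x\<bar>))"

definition opnorm :: "(('x::finite \<Rightarrow> real) \<Rightarrow> ('x \<Rightarrow> real)) \<Rightarrow> real" where
  "opnorm A = Sup {fnorm (A f) | f. fnorm f = 1}"

definition lower_transition_rate_operator ::
  "(('x \<Rightarrow> real) \<Rightarrow> ('x \<Rightarrow> real)) \<Rightarrow> bool" where
  "lower_transition_rate_operator Q \<longleftrightarrow>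
     (\<forall>\<mu>::real. Q (\<lambda>_. \<mu>) = (\<lambda>_. 0)) \<and>
     (\<forall>f g. \<forall>x. Q (\<lambda>z. f z + g z) x \<ge> Q f x + Q g x) \<and>
     (\<forall>f (c::real). c \<ge> 0 \<longrightarrow> Q (\<lambda>z. c * f z) = (\<lambda>x. c * Q f x)) \<and>
     (\<forall>x y. x \<noteq> y \<longrightarrow> Q (indic1 y) x \<ge> 0)"

end

theory Submission
  imports Defs
begin

text \<open>
  Superadditivity, positive homogeneity and \<open>Q 0 = 0\<close> alone make a lower transition rate operator \<open>Q\<close>
  Lipschitz: decomposing \<open>f = \<Sum>\<^sub>y f y \<cdot> \<bbbI>\<^sub>y\<close> gives
  \<open>\<bar>Q f x - Q g x\<bar> \<le> \<parallel>f - g\<parallel> \<cdot> K\<^sub>Q x\<close> with a weight \<open>K\<^sub>Q\<close> computed from the values of \<open>Q\<close> on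
  \<open>\<plusminus>\<bbbI>\<^sub>y\<close>. Uniform convergence implies pointwise convergence by homogeneity. Conversely,
  pointwise convergence on the finitely many functions \<open>\<plusminus>\<bbbI>\<^sub>y\<close> bounds the weights of the
  \<open>Q\<^sub>n\<close> uniformly, so the \<open>Q\<^sub>n\<close> are equi-Lipschitz, and pointwise convergence on a finite
  \<open>\<delta>\<close>-net of the unit ball then yields uniform convergence on the whole ball.
\<close>

lemma abs_le_fnorm: "\<bar>f x\<bar> \<le> fnorm f"
  unfolding fnorm_def by (rule Max_ge) auto

lemma fnorm_le: "(\<And>x. \<bar>f x\<bar> \<le> c) \<Longrightarrow> fnorm f \<le> c"
  unfolding fnorm_def by (subst Max_le_iff) auto

lemma fnorm_nonneg: "0 \<le> fnorm f"
  using order_trans[OF abs_ge_zero abs_le_fnorm] by blast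

lemma fnorm_attained: obtains x where "fnorm f = \<bar>f x\<bar>"
proof -
  have "Max (range (\<lambda>x. \<bar>f x\<bar>)) \<in> range (\<lambda>x. \<bar>f x\<bar>)" by (rule Max_in) auto
  then show ?thesis using that unfolding fnorm_def by blast
qed

lemma fnorm_const: "fnorm (\<lambda>_::'x::finite. c) = \<bar>c\<bar>"
  by (rule fnorm_attained) simp

lemma fnorm_diff_commute: "fnorm (\<lambda>z. f z - g z) = fnorm (\<lambda>z. g z - f z)"
proof (intro antisym fnorm_le)
  show "\<bar>f x - g x\<bar> \<le> fnorm (\<lambda>z. g z - f z)" for x
    using abs_le_fnorm[of "\<lambda>z. g z - f z" x] by (simp add: abs_minus_commute)
  show "\<bar>g x - f x\<bar> \<le> fnorm (\<lambda>z. f z - g z)" for x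
    using abs_le_fnorm[of "\<lambda>z. f z - g z" x] by (simp add: abs_minus_commute)
qed

lemma fnorm_eq_0_iff: "fnorm f = 0 \<longleftrightarrow> f = (\<lambda>_. 0)"
  using abs_le_fnorm[of f] fnorm_const[of 0] by force

lemma fnorm_normalize:
  assumes "fnorm f \<noteq> 0"
  shows "fnorm (\<lambda>z. f z / fnorm f) = 1"
proof -
  obtain x where x: "fnorm f = \<bar>f x\<bar>" by (rule fnorm_attained)
  have pos: "fnorm f > 0" using assms fnorm_nonneg[of f] by linarith
  show ?thesis
  proof (rule antisym)
    show "fnorm (\<lambda>z. f z / fnorm f) \<le> 1"
      using pos abs_le_fnorm[of f] by (intro fnorm_le) (simp add: abs_div)
    show "1 \<le> fnorm (\<lambda>z. f z / fnorm f)"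
      using pos x abs_le_fnorm[of "\<lambda>z. f z / fnorm f" x] by (simp add: abs_div)
  qed
qed

lemma opnorm_le:
  assumes "\<And>f. fnorm f = 1 \<Longrightarrow> fnorm (A f) \<le> c"
  shows "opnorm (A :: ('x::finite \<Rightarrow> real) \<Rightarrow> ('x \<Rightarrow> real)) \<le> c"
  unfolding opnorm_def
proof (rule cSup_least)
  show "{fnorm (A f) |f. fnorm f = 1} \<noteq> {}"
    using fnorm_const[of 1] by force
qed (use assms in auto)

lemma fnorm_le_opnorm:
  assumes bounded: "\<And>f. fnorm f = 1 \<Longrightarrow> fnorm (A f) \<le> B"
    and "fnorm f = 1"
  shows "fnorm (A f) \<le> opnorm (A :: ('x::finite \<Rightarrow> real) \<Rightarrow> ('x \<Rightarrow> real))"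
  unfolding opnorm_def
proof (rule cSup_upper)
  show "bdd_above {fnorm (A f) |f. fnorm f = 1}"
    using bounded by (auto intro!: bdd_aboveI[of _ B])
qed (use assms in auto)

lemma opnorm_nonneg:
  assumes "\<And>f. fnorm f = 1 \<Longrightarrow> fnorm (A f) \<le> B"
  shows "0 \<le> opnorm (A :: ('x::finite \<Rightarrow> real) \<Rightarrow> ('x \<Rightarrow> real))"
  using fnorm_le_opnorm[of A B "\<lambda>_. 1", OF assms] fnorm_nonneg[of "A (\<lambda>_. 1)"]
  by (simp add: fnorm_const)

lemma fnorm_le_fnorm_mult_opnorm:
  fixes A :: "('x::finite \<Rightarrow> real) \<Rightarrow> ('x \<Rightarrow> real)"
  assumes bounded: "\<And>f. fnorm f = 1 \<Longrightarrow> fnorm (A f) \<le> B"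
    and homogeneous: "\<And>c f. c \<ge> 0 \<Longrightarrow> A (\<lambda>z. c * f z) = (\<lambda>x. c * A f x)"
  shows "fnorm (A f) \<le> fnorm f * opnorm A"
proof (cases "fnorm f = 0")
  case True
  then show ?thesis
    using homogeneous[of 0 f] by (simp add: fnorm_eq_0_iff fnorm_const)
next
  case False
  define u where "u = (\<lambda>z. f z / fnorm f)"
  have "f = (\<lambda>z. fnorm f * u z)" using False unfolding u_def by auto
  then have "A f = (\<lambda>x. fnorm f * A u x)"
    using homogeneous[OF fnorm_nonneg] by metis
  moreover have "fnorm (A u) \<le> opnorm A"
    unfolding u_def using bounded fnorm_normalize[OF False] by (rule fnorm_le_opnorm)
  ultimately show ?thesis
    using order_trans[OF abs_le_fnorm] fnorm_nonneg[of f]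
    by (auto intro!: fnorm_le mult_left_mono simp: abs_mult)
qed

lemma ltro_const: "lower_transition_rate_operator Q \<Longrightarrow> Q (\<lambda>_. c) = (\<lambda>_. 0)"
  unfolding lower_transition_rate_operator_def by blast

lemma ltro_superadditive:
  "lower_transition_rate_operator Q \<Longrightarrow> Q f x + Q g x \<le> Q (\<lambda>z. f z + g z) x"
  unfolding lower_transition_rate_operator_def by blast

lemma ltro_pos_homogeneous:
  "lower_transition_rate_operator Q \<Longrightarrow> c \<ge> 0 \<Longrightarrow> Q (\<lambda>z. c * f z) = (\<lambda>x. c * Q f x)"
  unfolding lower_transition_rate_operator_def by blast

lemma ltro_sum_superadditive:
  assumes Q: "lower_transition_rate_operator Q" and "finite A"
  shows "(\<Sum>y\<in>A. Q (g y) x) \<le> Q (\<lambda>z. \<Sum>y\<in>A. g y z) x"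
  using \<open>finite A\<close>
proof (induction A rule: finite_induct)
  case empty
  then show ?case using ltro_const[OF Q] by simp
next
  case (insert a A)
  then show ?case
    using ltro_superadditive[OF Q, of "g a" x "\<lambda>z. \<Sum>y\<in>A. g y z"] by simp
qed

lemma sum_indic1_expansion: "(\<lambda>z. \<Sum>y\<in>UNIV. f y * indic1 y z) = (f :: 'x::finite \<Rightarrow> real)"
  by (simp add: indic1_def if_distrib[of "(*) _"] cong: if_cong)

lemma ltro_scaled_lower_bound:
  assumes Q: "lower_transition_rate_operator Q"
  shows "- \<bar>c\<bar> * (\<bar>Q g x\<bar> + \<bar>Q (\<lambda>z. - g z) x\<bar>) \<le> Q (\<lambda>z. c * g z) x"
proof -
  define v where "v = (if c \<ge> 0 then Q g x else Q (\<lambda>z. - g z) x)"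
  have v_le: "\<bar>v\<bar> \<le> \<bar>Q g x\<bar> + \<bar>Q (\<lambda>z. - g z) x\<bar>"
    unfolding v_def by auto
  have "- \<bar>c\<bar> * (\<bar>Q g x\<bar> + \<bar>Q (\<lambda>z. - g z) x\<bar>) \<le> - \<bar>c * v\<bar>"
    using mult_left_mono[OF v_le abs_ge_zero[of c]] by (simp add: abs_mult)
  also have "\<dots> \<le> \<bar>c\<bar> * v"
    using abs_ge_minus_self[of "\<bar>c\<bar> * v"] by (simp add: abs_mult)
  also have "\<dots> = Q (\<lambda>z. c * g z) x"
  proof (cases "c \<ge> 0")
    case True
    then show ?thesis
      unfolding v_def using ltro_pos_homogeneous[OF Q True, of g] by simp
  next
    case False
    then have "Q (\<lambda>z. (- c) * (- g z)) = (\<lambda>x. (- c) * Q (\<lambda>z. - g z) x)"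
      by (intro ltro_pos_homogeneous[OF Q]) simp
    then show ?thesis
      unfolding v_def using False by simp
  qed
  finally show ?thesis .
qed

text \<open>The pointwise Lipschitz constant of \<open>Q\<close> (see \<open>ltro_lipschitz\<close>).\<close>

definition rate_weight :: "(('x::finite \<Rightarrow> real) \<Rightarrow> ('x \<Rightarrow> real)) \<Rightarrow> 'x \<Rightarrow> real" where
  "rate_weight Q x = (\<Sum>y\<in>UNIV. \<bar>Q (indic1 y) x\<bar> + \<bar>Q (\<lambda>z. - indic1 y z) x\<bar>)"

lemma rate_weight_nonneg: "0 \<le> rate_weight Q x"
  unfolding rate_weight_def by (intro sum_nonneg) auto

lemma ltro_lower_bound:
  assumes Q: "lower_transition_rate_operator Q"
  shows "- fnorm f * rate_weight Q x \<le> Q f x"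
proof -
  have "- fnorm f * rate_weight Q x
      = (\<Sum>y\<in>UNIV. - fnorm f * (\<bar>Q (indic1 y) x\<bar> + \<bar>Q (\<lambda>z. - indic1 y z) x\<bar>))"
    unfolding rate_weight_def by (simp add: sum_distrib_left)
  also have "\<dots> \<le> (\<Sum>y\<in>UNIV. - \<bar>f y\<bar> * (\<bar>Q (indic1 y) x\<bar> + \<bar>Q (\<lambda>z. - indic1 y z) x\<bar>))"
    by (intro sum_mono mult_right_mono) (auto simp: abs_le_fnorm)
  also have "\<dots> \<le> (\<Sum>y\<in>UNIV. Q (\<lambda>z. f y * indic1 y z) x)"
    by (intro sum_mono ltro_scaled_lower_bound[OF Q])
  also have "\<dots> \<le> Q f x"
    using ltro_sum_superadditive[OF Q finite_class.finite_UNIV, of "\<lambda>y z. f y * indic1 y z" x]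
    unfolding sum_indic1_expansion .
  finally show ?thesis .
qed

lemma ltro_lipschitz:
  assumes Q: "lower_transition_rate_operator Q"
  shows "\<bar>Q f x - Q g x\<bar> \<le> fnorm (\<lambda>z. f z - g z) * rate_weight Q x"
proof -
  have "Q (\<lambda>z. f z - g z) x + Q g x \<le> Q f x" "Q (\<lambda>z. g z - f z) x + Q f x \<le> Q g x"
    using ltro_superadditive[OF Q, of "\<lambda>z. f z - g z" x g]
      ltro_superadditive[OF Q, of "\<lambda>z. g z - f z" x f] by simp_all
  then show ?thesis
    using ltro_lower_bound[OF Q, of "\<lambda>z. f z - g z" x] ltro_lower_bound[OF Q, of "\<lambda>z. g z - f z" x]
    unfolding fnorm_diff_commute[of g] by linarith
qed

lemma ltro_abs_le: "lower_transition_rate_operator Q \<Longrightarrow> \<bar>Q f x\<bar> \<le> fnorm f * rate_weight Q x"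
  using ltro_lipschitz[of Q f x "\<lambda>_. 0"] by (simp add: ltro_const)

lemma ltro_diff_bounded:
  assumes P: "lower_transition_rate_operator P" and Q: "lower_transition_rate_operator Q"
    and f: "fnorm f = 1"
  shows "fnorm (\<lambda>x. P f x - Q f x) \<le> fnorm (rate_weight P) + fnorm (rate_weight Q)"
proof (rule fnorm_le)
  fix x
  have "\<bar>P f x\<bar> \<le> rate_weight P x" "\<bar>Q f x\<bar> \<le> rate_weight Q x"
    using ltro_abs_le[OF P, of f x] ltro_abs_le[OF Q, of f x] by (simp_all add: f)
  then have "\<bar>P f x - Q f x\<bar> \<le> rate_weight P x + rate_weight Q x"
    by (rule order_trans[OF abs_triangle_ineq4 add_mono])
  also have "\<dots> \<le> fnorm (rate_weight P) + fnorm (rate_weight Q)"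
    using abs_le_fnorm[of "rate_weight P" x] abs_le_fnorm[of "rate_weight Q" x] by linarith
  finally show "\<bar>P f x - Q f x\<bar> \<le> fnorm (rate_weight P) + fnorm (rate_weight Q)" .
qed

lemma ltro_diff_fnorm_le_opnorm:
  assumes P: "lower_transition_rate_operator P" and Q: "lower_transition_rate_operator Q"
  shows "fnorm (\<lambda>x. P f x - Q f x) \<le> fnorm f * opnorm (\<lambda>f x. P f x - Q f x)"
proof (rule fnorm_le_fnorm_mult_opnorm)
  show "fnorm (\<lambda>x. P f x - Q f x) \<le> fnorm (rate_weight P) + fnorm (rate_weight Q)"
    if "fnorm f = 1" for f
    using ltro_diff_bounded[OF P Q that] .
  show "(\<lambda>x. P (\<lambda>z. c * f z) x - Q (\<lambda>z. c * f z) x) = (\<lambda>x. c * (P f x - Q f x))"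
    if "c \<ge> 0" for c f
    using ltro_pos_homogeneous[OF P that] ltro_pos_homogeneous[OF Q that]
    by (simp add: right_diff_distrib)
qed

lemma ltro_diff_opnorm_nonneg:
  assumes "lower_transition_rate_operator P" and "lower_transition_rate_operator Q"
  shows "0 \<le> opnorm (\<lambda>(f::'x::finite \<Rightarrow> real) x. P f x - Q f x)"
  using ltro_diff_bounded[OF assms] by (rule opnorm_nonneg)

lemma ltro_diff_fnorm_le_near:
  fixes P Q :: "('x::finite \<Rightarrow> real) \<Rightarrow> ('x \<Rightarrow> real)"
  assumes P: "lower_transition_rate_operator P" and Q: "lower_transition_rate_operator Q"
    and near: "fnorm (\<lambda>z. h z - g z) \<le> d"
    and weights: "\<And>x. rate_weight P x \<le> L" "\<And>x. rate_weight Q x \<le> L"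
  shows "fnorm (\<lambda>x. P h x - Q h x) \<le> fnorm (\<lambda>x. P g x - Q g x) + 2 * d * L"
proof (rule fnorm_le)
  fix x
  have "fnorm (\<lambda>z. h z - g z) * rate_weight R x \<le> d * L"
    if "rate_weight R x \<le> L" for R :: "('x \<Rightarrow> real) \<Rightarrow> ('x \<Rightarrow> real)"
    using near that order_trans[OF fnorm_nonneg near]
    by (intro mult_mono) (auto intro: fnorm_nonneg rate_weight_nonneg)
  then have "\<bar>P h x - P g x\<bar> \<le> d * L" "\<bar>Q h x - Q g x\<bar> \<le> d * L"
    using ltro_lipschitz[OF P, of h x g] ltro_lipschitz[OF Q, of h x g] weights
    by (blast intro: order_trans)+
  moreover have "\<bar>P g x - Q g x\<bar> \<le> fnorm (\<lambda>x. P g x - Q g x)"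
    by (rule abs_le_fnorm)
  moreover have "\<bar>P h x - Q h x\<bar> = \<bar>(P h x - P g x) + (P g x - Q g x) - (Q h x - Q g x)\<bar>"
    by simp
  moreover have "\<dots> \<le> \<bar>P h x - P g x\<bar> + \<bar>P g x - Q g x\<bar> + \<bar>Q h x - Q g x\<bar>"
    by (rule order_trans[OF abs_triangle_ineq4 add_right_mono[OF abs_triangle_ineq]])
  ultimately show "\<bar>P h x - Q h x\<bar> \<le> fnorm (\<lambda>x. P g x - Q g x) + 2 * d * L"
    by linarith
qed

lemma rate_weight_le:
  "rate_weight P x \<le> rate_weight Q x +
     (\<Sum>y\<in>UNIV. fnorm (\<lambda>x. P (indic1 y) x - Q (indic1 y) x)
       + fnorm (\<lambda>x. P (\<lambda>z. - indic1 y z) x - Q (\<lambda>z. - indic1 y z) x))"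
proof -
  have triangle: "\<bar>P f x\<bar> \<le> \<bar>Q f x\<bar> + fnorm (\<lambda>x. P f x - Q f x)" for f
    using abs_triangle_ineq2[of "P f x" "Q f x"] abs_le_fnorm[of "\<lambda>x. P f x - Q f x" x]
    by linarith
  have "rate_weight P x \<le> (\<Sum>y\<in>UNIV.
      (\<bar>Q (indic1 y) x\<bar> + fnorm (\<lambda>x. P (indic1 y) x - Q (indic1 y) x))
      + (\<bar>Q (\<lambda>z. - indic1 y z) x\<bar> + fnorm (\<lambda>x. P (\<lambda>z. - indic1 y z) x - Q (\<lambda>z. - indic1 y z) x)))"
    unfolding rate_weight_def by (intro sum_mono add_mono triangle)
  then show ?thesis
    unfolding rate_weight_def sum.distrib[symmetric] by (simp only: add_ac)
qed

lemma rate_weight_eventually_bounded: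
  fixes Qn :: "nat \<Rightarrow> ('x::finite \<Rightarrow> real) \<Rightarrow> ('x \<Rightarrow> real)"
  assumes conv: "\<And>f. (\<lambda>n. fnorm (\<lambda>x. Qn n f x - Q f x)) \<longlonglongrightarrow> 0"
  shows "eventually (\<lambda>n. \<forall>x. rate_weight (Qn n) x \<le> fnorm (rate_weight Q) + 1) sequentially"
proof -
  have "(\<lambda>n. \<Sum>y\<in>UNIV. fnorm (\<lambda>x. Qn n (indic1 y) x - Q (indic1 y) x)
       + fnorm (\<lambda>x. Qn n (\<lambda>z. - indic1 y z) x - Q (\<lambda>z. - indic1 y z) x)) \<longlonglongrightarrow> 0"
    by (intro tendsto_null_sum tendsto_add_zero conv)
  then have "eventually (\<lambda>n. (\<Sum>y\<in>UNIV. fnorm (\<lambda>x. Qn n (indic1 y) x - Q (indic1 y) x)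
       + fnorm (\<lambda>x. Qn n (\<lambda>z. - indic1 y z) x - Q (\<lambda>z. - indic1 y z) x)) < 1) sequentially"
    by (rule order_tendstoD) simp
  then show ?thesis
  proof eventually_elim
    case (elim n)
    show ?case
    proof
      fix x
      show "rate_weight (Qn n) x \<le> fnorm (rate_weight Q) + 1"
        using rate_weight_le[of "Qn n" x Q] elim abs_ge_self[of "rate_weight Q x"]
          abs_le_fnorm[of "rate_weight Q" x]
        by linarith
    qed
  qed
qed

lemma finite_net_unit_ball:
  fixes d :: real
  assumes "d > 0"
  obtains G :: "('x::finite \<Rightarrow> real) set"
  where "finite G" "\<And>h. fnorm h \<le> 1 \<Longrightarrow> \<exists>g\<in>G. fnorm (\<lambda>z. h z - g z) \<le> d"
proof
  define N where "N = \<lceil>1 / d\<rceil>"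
  show "finite (PiE (UNIV::'x set) (\<lambda>_. (\<lambda>k. of_int k * d) ` {-N..N}))"
    by (intro finite_PiE) auto
  fix h :: "'x \<Rightarrow> real"
  assume h: "fnorm h \<le> 1"
  define g where "g = (\<lambda>x. of_int \<lfloor>h x / d\<rfloor> * d)"
  have "\<lfloor>h x / d\<rfloor> \<in> {-N..N}" for x
  proof -
    have "\<bar>h x\<bar> \<le> 1"
      using abs_le_fnorm[of h x] h by linarith
    then have "- (1 / d) \<le> h x / d" "h x / d \<le> 1 / d"
      using \<open>d > 0\<close> divide_right_mono[of "- 1" "h x" d] divide_right_mono[of "h x" 1 d]
      by (auto simp: abs_le_iff)
    moreover have "1 / d \<le> of_int N"
      unfolding N_def by (rule le_of_int_ceiling)
    ultimately show ?thesis
      by (auto simp: le_floor_iff floor_le_iff)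
  qed
  then show "\<exists>g\<in>PiE (UNIV::'x set) (\<lambda>_. (\<lambda>k. of_int k * d) ` {-N..N}). fnorm (\<lambda>z. h z - g z) \<le> d"
  proof (intro bexI[of _ g])
    show "fnorm (\<lambda>z. h z - g z) \<le> d"
    proof (rule fnorm_le)
      fix x
      show "\<bar>h x - g x\<bar> \<le> d"
        using floor_divide_lower[OF \<open>d > 0\<close>, of "h x"] floor_divide_upper[OF \<open>d > 0\<close>, of "h x"]
        unfolding g_def by (simp add: abs_le_iff distrib_right)
    qed
  qed (auto simp: g_def)
qed

lemma ltro_opnorm_tendsto_of_pointwise:
  fixes Qn :: "nat \<Rightarrow> ('x::finite \<Rightarrow> real) \<Rightarrow> ('x \<Rightarrow> real)"
  assumes Q: "lower_transition_rate_operator Q"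
    and Qn: "\<And>n. lower_transition_rate_operator (Qn n)"
    and conv: "\<And>f. (\<lambda>n. fnorm (\<lambda>x. Qn n f x - Q f x)) \<longlonglongrightarrow> 0"
  shows "(\<lambda>n. opnorm (\<lambda>f x. Qn n f x - Q f x)) \<longlonglongrightarrow> 0"
proof (rule order_tendstoI)
  fix a :: real
  assume "a < 0"
  have "a < opnorm (\<lambda>f x. Qn n f x - Q f x)" for n
    using \<open>a < 0\<close> ltro_diff_opnorm_nonneg[OF Qn Q] by (rule order.strict_trans2)
  then show "eventually (\<lambda>n. a < opnorm (\<lambda>f x. Qn n f x - Q f x)) sequentially"
    by simp
next
  fix e :: real
  assume e: "e > 0"
  define L where "L = fnorm (rate_weight Q) + 1"
  have "L \<ge> 0" unfolding L_def using fnorm_nonneg[of "rate_weight Q"] by simp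
  have weight_Q: "rate_weight Q x \<le> L" for x
    unfolding L_def using abs_ge_self[of "rate_weight Q x"] abs_le_fnorm[of "rate_weight Q" x]
    by linarith
  define d where "d = e / (4 * (L + 1))"
  have d: "d > 0" "e / 2 + 2 * d * L < e"
    using e \<open>L \<ge> 0\<close> by (auto simp: d_def field_simps)
  obtain G :: "('x \<Rightarrow> real) set"
    where "finite G" and net: "\<And>h. fnorm h \<le> 1 \<Longrightarrow> \<exists>g\<in>G. fnorm (\<lambda>z. h z - g z) \<le> d"
    using finite_net_unit_ball[OF \<open>d > 0\<close>] by blast
  have "eventually (\<lambda>n. \<forall>g\<in>G. fnorm (\<lambda>x. Qn n g x - Q g x) < e / 2) sequentially"
    using \<open>finite G\<close> e by (intro eventually_ball_finite ballI order_tendstoD(2)[OF conv]) auto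
  moreover have "eventually (\<lambda>n. \<forall>x. rate_weight (Qn n) x \<le> L) sequentially"
    unfolding L_def using conv by (rule rate_weight_eventually_bounded)
  ultimately show "eventually (\<lambda>n. opnorm (\<lambda>f x. Qn n f x - Q f x) < e) sequentially"
  proof eventually_elim
    case (elim n)
    have "opnorm (\<lambda>f x. Qn n f x - Q f x) \<le> e / 2 + 2 * d * L"
    proof (rule opnorm_le)
      fix h :: "'x \<Rightarrow> real"
      assume "fnorm h = 1"
      then obtain g where "g \<in> G" and near: "fnorm (\<lambda>z. h z - g z) \<le> d"
        using net[of h] by auto
      have "fnorm (\<lambda>x. Qn n h x - Q h x) \<le> fnorm (\<lambda>x. Qn n g x - Q g x) + 2 * d * L"
        using elim weight_Q by (intro ltro_diff_fnorm_le_near[OF Qn Q near]) auto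
      then show "fnorm (\<lambda>x. Qn n h x - Q h x) \<le> e / 2 + 2 * d * L"
        using elim \<open>g \<in> G\<close> by fastforce
    qed
    then show ?case using d by linarith
  qed
qed

lemma ltro_pointwise_tendsto_of_opnorm:
  fixes Qn :: "nat \<Rightarrow> ('x::finite \<Rightarrow> real) \<Rightarrow> ('x \<Rightarrow> real)"
  assumes Q: "lower_transition_rate_operator Q"
    and Qn: "\<And>n. lower_transition_rate_operator (Qn n)"
    and uniform: "(\<lambda>n. opnorm (\<lambda>f x. Qn n f x - Q f x)) \<longlonglongrightarrow> 0"
  shows "(\<lambda>n. fnorm (\<lambda>x. Qn n f x - Q f x)) \<longlonglongrightarrow> 0"
proof -
  have "(\<lambda>n. fnorm f * opnorm (\<lambda>f x. Qn n f x - Q f x)) \<longlonglongrightarrow> 0"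
    using tendsto_mult_right_zero[OF uniform] .
  then show ?thesis
    by (rule tendsto_sandwich[rotated 2, OF tendsto_const])
      (simp_all add: fnorm_nonneg ltro_diff_fnorm_le_opnorm[OF Qn Q])
qed

theorem proposition5:
  fixes Q :: "('x::finite \<Rightarrow> real) \<Rightarrow> ('x \<Rightarrow> real)"
    and Qn :: "nat \<Rightarrow> ('x \<Rightarrow> real) \<Rightarrow> ('x \<Rightarrow> real)"
  assumes "lower_transition_rate_operator Q"
    and "\<And>n. lower_transition_rate_operator (Qn n)"
  shows "(\<lambda>n. opnorm (\<lambda>f x. Qn n f x - Q f x)) \<longlonglongrightarrow> 0
     \<longleftrightarrow> (\<forall>f. (\<lambda>n. fnorm (\<lambda>x. Qn n f x - Q f x)) \<longlonglongrightarrow> 0)"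
  using assms ltro_pointwise_tendsto_of_opnorm[of Q Qn] ltro_opnorm_tendsto_of_pointwise[of Q Qn]
  by blast

end
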